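(* Let $G$ be a finite directed graph and $R\subseteq V(G)$. Then $\mathrm{DT}_R(G)$ is shellable.
   Context: A directed forest in $G$ is a set of edges of $G$ which, viewed as a graph on $V(G)$, is acyclic and has at most one edge directed to each vertex; its roots are the vertices of $V(G)$ with no edge of the forest directed to them. $\mathrm{DT}(G)$ is the simplicial complex with vertex set $E(G)$ whose simplices are the directed forests. $\mathrm{DT}_R(G)\subseteq \mathrm{DT}(G)$ is the subcomplex generated by the faces of $\mathrm{DT}(G)$ that are edge sets of directed forests with root set exactly $R$. A simplicial complex $\Delta$ is shellable if its maximal faces can be ordered $F_1,\dots,F_n$ such that for all $1\le i<k\le n$ there exist $1\le j<k$ and $e\in F_k$ with $F_i\cap F_k\subseteq F_j\cap F_k=F_k\setminus\{e\}$. *)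

theory Defs
  imports Main
begin

text \<open>An undirected cycle in an edge set F (edges viewed as undirected,
parallel/antiparallel edges and loops allowed): distinct edges e_0..e_{k-1},
k \<ge> 1, joining a closed walk v_0 .. v_k = v_0 with v_0..v_{k-1} distinct.\<close>
definition has_undirected_cycle :: "('v \<times> 'v) set \<Rightarrow> bool" where
  "has_undirected_cycle F \<longleftrightarrow>
     (\<exists>es vs. length es \<ge> 1 \<and> length vs = length es + 1 \<and> distinct es \<and>
        set es \<subseteq> F \<and> hd vs = last vs \<and> distinct (tl vs) \<and>
        (\<forall>i < length es. es ! i = (vs ! i, vs ! Suc i) \<or> es ! i = (vs ! Suc i, vs ! i)))"

definition directed_forest :: "'v set \<Rightarrow> ('v \<times> 'v) set \<Rightarrow> ('v \<times> 'v) set \<Rightarrow> bool" where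
  "directed_forest V E F \<longleftrightarrow> F \<subseteq> E \<and> \<not> has_undirected_cycle F \<and>
     (\<forall>v \<in> V. card {u. (u, v) \<in> F} \<le> 1)"

definition forest_roots :: "'v set \<Rightarrow> ('v \<times> 'v) set \<Rightarrow> 'v set" where
  "forest_roots V F = {v \<in> V. \<forall>u. (u, v) \<notin> F}"

definition DT_R :: "'v set \<Rightarrow> ('v \<times> 'v) set \<Rightarrow> 'v set \<Rightarrow> ('v \<times> 'v) set set" where
  "DT_R V E R = {S. \<exists>F. directed_forest V E F \<and> forest_roots V F = R \<and> S \<subseteq> F}"

definition facets :: "'a set set \<Rightarrow> 'a set set" where
  "facets \<Delta> = {F \<in> \<Delta>. \<forall>G \<in> \<Delta>. F \<subseteq> G \<longrightarrow> G = F}"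

definition shellable :: "'a set set \<Rightarrow> bool" where
  "shellable \<Delta> \<longleftrightarrow> (\<exists>Fs. distinct Fs \<and> set Fs = facets \<Delta> \<and>
     (\<forall>i k. i < k \<and> k < length Fs \<longrightarrow>
        (\<exists>j < k. \<exists>e \<in> Fs ! k. Fs ! i \<inter> Fs ! k \<subseteq> Fs ! j \<inter> Fs ! k \<and>
                              Fs ! j \<inter> Fs ! k = Fs ! k - {e})))"

end

theory Submission
  imports Defs "HOL-Library.Multiset_Order" "HOL-Library.Product_Lexorder"
begin

text \<open>The facets of \<open>DT\<^sub>R(G)\<close> are the forests in which every vertex outside \<open>R\<close> has exactly one
parent and following parents always leads into \<open>R\<close>. Order them by the sum of the depths of all
vertices, breaking ties colexicographically with respect to an enumeration of the edges. If \<open>F'\<close>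
comes before \<open>F\<close>, there is a vertex \<open>x\<close> whose parent \<open>w\<close> in \<open>F'\<close> is strictly shallower in \<open>F\<close> than
\<open>x\<close> and differs from its parent in \<open>F\<close>: either some vertex is shallower in \<open>F'\<close> than in \<open>F\<close>, and
\<open>x\<close> is such a vertex of least \<open>F'\<close>-depth, or all depths agree and \<open>x\<close> is the head of the
colexicographically largest edge of \<open>F - F'\<close>. Replacing the parent edge of \<open>x\<close> in \<open>F\<close> by \<open>(w, x)\<close>
creates no cycle because \<open>w\<close> is shallower than \<open>x\<close>; the resulting facet comes before \<open>F\<close>,
contains \<open>F' \<inter> F\<close>, and misses exactly one edge of \<open>F\<close>, which is a shelling step.\<close>

section \<open>Shellings from ranked exchanges\<close>

lemma shellable_if_ranked_exchange:
  fixes rank :: "'a set \<Rightarrow> 'b::linorder"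
  assumes fin: "finite (facets \<Delta>)" and inj: "inj_on rank (facets \<Delta>)"
    and exchange: "\<And>F F'. F \<in> facets \<Delta> \<Longrightarrow> F' \<in> facets \<Delta> \<Longrightarrow> rank F' < rank F \<Longrightarrow>
       \<exists>G \<in> facets \<Delta>. rank G < rank F \<and> (\<exists>e \<in> F. F' \<inter> F \<subseteq> G \<inter> F \<and> G \<inter> F = F - {e})"
  shows "shellable \<Delta>"
proof -
  interpret folding_insort_key "(\<le>)" "(<)" "facets \<Delta>" rank
    using inj by unfold_locales
  obtain Fs where set_Fs: "set Fs = facets \<Delta>"
    and "sorted (map rank Fs)" "distinct (map rank Fs)"
    using set_sorted_key_list_of_set[OF subset_refl fin] sorted_sorted_key_list_of_set[OF subset_refl]
      distinct_sorted_key_list_of_set[OF subset_refl] by blast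
  then have rank_less_iff: "rank (Fs ! i) < rank (Fs ! k) \<longleftrightarrow> i < k"
    if "i < length Fs" "k < length Fs" for i k
    using that by (metis length_map nth_map sorted_wrt_nth_less strict_sorted_iff linorder_neqE_nat
        less_asym)
  show ?thesis
    unfolding shellable_def
  proof (rule exI[of _ Fs], intro conjI allI impI)
    show "distinct Fs" "set Fs = facets \<Delta>"
      using \<open>distinct (map rank Fs)\<close> set_Fs by (simp_all add: distinct_map)
    fix i k assume ik: "i < k \<and> k < length Fs"
    then have "Fs ! i \<in> facets \<Delta>" "Fs ! k \<in> facets \<Delta>" "rank (Fs ! i) < rank (Fs ! k)"
      using set_Fs rank_less_iff by auto
    then obtain G e where G: "G \<in> facets \<Delta>" "rank G < rank (Fs ! k)" "e \<in> Fs ! k"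
      "Fs ! i \<inter> Fs ! k \<subseteq> G \<inter> Fs ! k" "G \<inter> Fs ! k = Fs ! k - {e}"
      using exchange by blast
    then obtain j where "j < length Fs" "Fs ! j = G"
      using set_Fs by (metis in_set_conv_nth)
    with G ik rank_less_iff show "\<exists>j<k. \<exists>e\<in>Fs ! k. Fs ! i \<inter> Fs ! k \<subseteq> Fs ! j \<inter> Fs ! k \<and>
        Fs ! j \<inter> Fs ! k = Fs ! k - {e}"
      by blast
  qed
qed

lemma facets_downward_closure:
  assumes "\<And>F F'. F \<in> \<F> \<Longrightarrow> F' \<in> \<F> \<Longrightarrow> F \<subseteq> F' \<Longrightarrow> F = F'"
  shows "facets {S. \<exists>F \<in> \<F>. S \<subseteq> F} = \<F>"
proof
  show "facets {S. \<exists>F \<in> \<F>. S \<subseteq> F} \<subseteq> \<F>"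
    unfolding facets_def by blast
  show "\<F> \<subseteq> facets {S. \<exists>F \<in> \<F>. S \<subseteq> F}"
    unfolding facets_def using assms by (blast intro: subset_antisym)
qed

section \<open>Undirected cycles\<close>

lemma no_undirected_cycle_if_height:
  fixes h :: "'v \<Rightarrow> 'b::linorder"
  assumes height: "\<And>u v. (u, v) \<in> F \<Longrightarrow> h u < h v"
    and in_unique: "\<And>u u' v. (u, v) \<in> F \<Longrightarrow> (u', v) \<in> F \<Longrightarrow> u = u'"
  shows "\<not> has_undirected_cycle F"
proof
  assume "has_undirected_cycle F"
  then obtain es vs where k1: "length es \<ge> 1" and lv: "length vs = length es + 1"
    and des: "distinct es" and sub: "set es \<subseteq> F" and hl: "hd vs = last vs"
    and joins: "\<forall>i < length es. es ! i = (vs ! i, vs ! Suc i) \<or> es ! i = (vs ! Suc i, vs ! i)"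
    unfolding has_undirected_cycle_def by blast
  define k where "k = length es"
  have closed: "vs ! k = vs ! 0"
    using hl lv k_def by (metis add_diff_cancel_right' hd_conv_nth last_conv_nth list.size(3)
        zero_eq_add_iff_both_eq_0 zero_neq_one)
  have edge: "es ! i \<in> F" if "i < k" for i
    using that sub k_def by (metis nth_mem subsetD)
  have "{1..k} \<noteq> {}" using k1 k_def by simp
  then obtain m where m: "m \<in> {1..k}" and m_Max: "Max ((\<lambda>t. h (vs ! t)) ` {1..k}) = h (vs ! m)"
    by (rule obtains_MAX[where f = "\<lambda>t. h (vs ! t)", OF finite_atLeastAtMost])
  have peak': "h (vs ! t) \<le> h (vs ! m)" if "t \<in> {1..k}" for t
    unfolding m_Max[symmetric] using that by (intro Max_ge) auto
  have peak: "h (vs ! t) \<le> h (vs ! m)" if "t \<le> k" for t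
    using that peak'[of t] peak'[of k] closed m by (cases "t = 0") auto
  txt \<open>Both cycle edges at the peak \<open>vs ! m\<close> point into it, so they share their tail.\<close>
  have into_peak: "es ! i = (vs ! t, vs ! m)"
    if "i < k" "t \<le> k" "es ! i = (vs ! t, vs ! m) \<or> es ! i = (vs ! m, vs ! t)" for i t
    using that peak[of t] height[of "vs ! m" "vs ! t"] edge[of i] by force
  have in_edge: "es ! (m - 1) = (vs ! (m - 1), vs ! m)"
  proof (rule into_peak)
    show "m - 1 < k" "m - 1 \<le> k" using m by auto
    show "es ! (m - 1) = (vs ! (m - 1), vs ! m) \<or> es ! (m - 1) = (vs ! m, vs ! (m - 1))"
      using joins \<open>m - 1 < k\<close> m k_def by (metis Suc_diff_1 atLeastAtMost_iff less_le_trans zero_less_one)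
  qed
  define s where "s = (if m < k then m else 0)"
  have s: "s < k" "vs ! s = vs ! m" using m closed k1 k_def s_def by auto
  have out_edge: "es ! s = (vs ! Suc s, vs ! m)"
    by (rule into_peak) (use s joins k_def in auto)
  have "vs ! (m - 1) = vs ! Suc s"
    using in_edge out_edge edge[of "m - 1"] edge[OF s(1)] m in_unique
    by (metis atLeastAtMost_iff diff_less less_le_trans zero_less_one)
  then have "es ! (m - 1) = es ! s" using in_edge out_edge by simp
  moreover have "m - 1 < length es" "s < length es" using m s k_def by auto
  ultimately have "m - 1 = s" using nth_eq_iff_index_eq[OF des] by blast
  then have "k = 1" "m = 1" using s_def m by (auto split: if_splits)
  then have "(vs ! 0, vs ! 0) \<in> F" using in_edge edge[of 0] closed by simp
  then show False using height by fastforce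
qed

lemma undirected_cycle_of_periodic_orbit:
  assumes c: "0 < c" "(f ^^ c) x = x" and inj: "inj_on (\<lambda>t. (f ^^ t) x) {0..<c}"
    and edges: "\<And>t. t < c \<Longrightarrow> ((f ^^ Suc t) x, (f ^^ t) x) \<in> F"
  shows "has_undirected_cycle F"
proof -
  define vs where "vs = rev (map (\<lambda>t. (f ^^ t) x) [0..<Suc c])"
  define es where "es = map (\<lambda>i. (vs ! i, vs ! Suc i)) [0..<c]"
  have vs_nth: "vs ! i = (f ^^ (c - i)) x" if "i \<le> c" for i
    using that unfolding vs_def by (auto simp: rev_nth simp del: upt_Suc)
  have vs_Cons: "vs = x # rev (map (\<lambda>t. (f ^^ t) x) [0..<c])"
    unfolding vs_def using c(2) by simp
  have "distinct (tl vs)"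
    using inj by (simp add: vs_Cons distinct_map)
  moreover have "distinct es"
  proof -
    have "inj_on (\<lambda>i. vs ! Suc i) {0..<c}"
    proof (rule inj_onI)
      fix i j assume ij: "i \<in> {0..<c}" "j \<in> {0..<c}" "vs ! Suc i = vs ! Suc j"
      then have "c - Suc i = c - Suc j"
        using inj_onD[OF inj] by (simp add: vs_nth Suc_le_eq)
      then show "i = j" using ij by auto
    qed
    then have "inj_on (\<lambda>i. (vs ! i, vs ! Suc i)) {0..<c}"
      by (auto simp: inj_on_def)
    then show ?thesis unfolding es_def by (simp add: distinct_map)
  qed
  moreover have "set es \<subseteq> F"
  proof
    fix e assume "e \<in> set es"
    then obtain i where "i < c" "e = ((f ^^ Suc (c - Suc i)) x, (f ^^ (c - Suc i)) x)"
      unfolding es_def by (auto simp: vs_nth Suc_diff_Suc)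
    then show "e \<in> F" using edges by simp
  qed
  moreover have "hd vs = last vs"
    using c by (simp add: vs_Cons upt_conv_Cons)
  moreover have "length vs = length es + 1" "length es \<ge> 1"
    unfolding vs_def es_def using c(1) by simp_all
  ultimately show ?thesis
    unfolding has_undirected_cycle_def by (intro exI[of _ es] exI[of _ vs]) (simp add: es_def)
qed

lemma finite_orbit_periodic_point:
  assumes "finite A" and orbit: "\<And>n. (f ^^ n) v \<in> A"
  obtains a c where "0 < c" "(f ^^ c) ((f ^^ a) v) = (f ^^ a) v"
    "inj_on (\<lambda>t. (f ^^ t) ((f ^^ a) v)) {0..<c}"
proof -
  have "\<not> inj_on (\<lambda>n. (f ^^ n) v) {..card A}"
  proof
    assume "inj_on (\<lambda>n. (f ^^ n) v) {..card A}"
    then have "card {..card A} \<le> card A"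
      using card_inj_on_le[OF _ _ \<open>finite A\<close>] orbit by blast
    then show False by simp
  qed
  then obtain a b where "a < b" "(f ^^ a) v = (f ^^ b) v"
    unfolding inj_on_def by (metis linorder_neqE_nat)
  define x where "x = (f ^^ a) v"
  have "(f ^^ (b - a)) x = (f ^^ (b - a + a)) v"
    unfolding x_def by (simp add: funpow_add)
  also have "\<dots> = x"
    using \<open>a < b\<close> \<open>(f ^^ a) v = (f ^^ b) v\<close> unfolding x_def by simp
  finally have "(f ^^ (b - a)) x = x" .
  define c where "c = (LEAST c. 0 < c \<and> (f ^^ c) x = x)"
  have c: "0 < c" "(f ^^ c) x = x"
    using LeastI[of "\<lambda>c. 0 < c \<and> (f ^^ c) x = x", OF conjI[OF _ \<open>(f ^^ (b - a)) x = x\<close>]]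
      \<open>a < b\<close> unfolding c_def by auto
  moreover have "inj_on (\<lambda>t. (f ^^ t) x) {0..<c}"
    by (rule inj_on_funpow_least) (use c not_less_Least in \<open>auto simp: c_def\<close>)
  ultimately show thesis using that unfolding x_def by blast
qed

section \<open>Forests as parent functions\<close>

definition parent :: "('v \<times> 'v) set \<Rightarrow> 'v \<Rightarrow> 'v" where
  "parent F v = (THE u. (u, v) \<in> F)"

definition unique_parents :: "'v set \<Rightarrow> 'v set \<Rightarrow> ('v \<times> 'v) set \<Rightarrow> bool" where
  "unique_parents V R F \<longleftrightarrow>
     F \<subseteq> V \<times> V \<and> (\<forall>v \<in> V - R. \<exists>!u. (u, v) \<in> F) \<and> (\<forall>v \<in> R. \<forall>u. (u, v) \<notin> F)"

definition reaches_roots :: "'v set \<Rightarrow> 'v set \<Rightarrow> ('v \<times> 'v) set \<Rightarrow> bool" where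
  "reaches_roots V R F \<longleftrightarrow> (\<forall>v \<in> V. \<exists>n. (parent F ^^ n) v \<in> R)"

definition depth :: "'v set \<Rightarrow> ('v \<times> 'v) set \<Rightarrow> 'v \<Rightarrow> nat" where
  "depth R F v = (LEAST n. (parent F ^^ n) v \<in> R)"

definition rooted_forests :: "'v set \<Rightarrow> ('v \<times> 'v) set \<Rightarrow> 'v set \<Rightarrow> ('v \<times> 'v) set set" where
  "rooted_forests V E R = {F. F \<subseteq> E \<and> unique_parents V R F \<and> reaches_roots V R F}"

context
  fixes V R :: "'v set" and F :: "('v \<times> 'v) set"
  assumes up: "unique_parents V R F"
begin

lemma unique_parents_edgeD:
  assumes "(u, v) \<in> F"
  shows "u \<in> V" "v \<in> V" "v \<notin> R"
  using assms up unfolding unique_parents_def by blast+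

lemma parent_edge:
  assumes "v \<in> V" "v \<notin> R"
  shows "(parent F v, v) \<in> F"
proof -
  have "\<exists>!u. (u, v) \<in> F" using assms up unfolding unique_parents_def by blast
  then show ?thesis unfolding parent_def by (rule theI')
qed

lemma parent_eqI:
  assumes "(u, v) \<in> F"
  shows "parent F v = u"
proof -
  have "\<exists>!u. (u, v) \<in> F"
    using assms up unique_parents_edgeD[OF assms] unfolding unique_parents_def by blast
  then show ?thesis unfolding parent_def using assms by (rule the1_equality)
qed

lemma parent_in_vertices:
  assumes "v \<in> V" "v \<notin> R"
  shows "parent F v \<in> V"
  using unique_parents_edgeD(1)[OF parent_edge[OF assms]] .

lemma reaches_roots_depth_le:
  fixes h :: "'v \<Rightarrow> nat"
  assumes decr: "\<And>v. v \<in> V \<Longrightarrow> v \<notin> R \<Longrightarrow> h (parent F v) < h v"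
  shows "reaches_roots V R F" and "v \<in> V \<Longrightarrow> depth R F v \<le> h v"
proof -
  have reach: "\<exists>n \<le> h v. (parent F ^^ n) v \<in> R" if "v \<in> V" for v
    using that
  proof (induction "h v" arbitrary: v rule: less_induct)
    case less
    show ?case
    proof (cases "v \<in> R")
      case True
      then show ?thesis by auto
    next
      case False
      then obtain n where "n \<le> h (parent F v)" "(parent F ^^ n) (parent F v) \<in> R"
        using less decr parent_in_vertices by meson
      then have "Suc n \<le> h v" "(parent F ^^ Suc n) v \<in> R"
        using decr[OF less.prems False] by (simp_all add: funpow_Suc_right del: funpow.simps)
      then show ?thesis by blast
    qed
  qed
  then show "reaches_roots V R F" unfolding reaches_roots_def by blast
  show "depth R F v \<le> h v" if "v \<in> V"
    using reach[OF that] unfolding depth_def by (meson Least_le order_trans)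
qed

context
  assumes reach: "reaches_roots V R F"
begin

lemma depth_parent:
  assumes "v \<in> V" "v \<notin> R"
  shows "depth R F v = Suc (depth R F (parent F v))"
proof -
  obtain n where "(parent F ^^ n) v \<in> R" using assms reach unfolding reaches_roots_def by blast
  then have "depth R F v = Suc (LEAST m. (parent F ^^ Suc m) v \<in> R)"
    unfolding depth_def by (rule Least_Suc) (use assms in simp)
  then show ?thesis
    unfolding depth_def by (simp add: funpow_Suc_right del: funpow.simps)
qed

lemma depth_edge_less:
  assumes "(u, v) \<in> F"
  shows "depth R F u < depth R F v"
  using depth_parent unique_parents_edgeD(2,3) parent_eqI assms by fastforce

end

end

lemma depth_root: "v \<in> R \<Longrightarrow> depth R F v = 0"
  unfolding depth_def by simp

lemma reaches_roots_if_no_undirected_cycle: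
  assumes fin: "finite V" and up: "unique_parents V R F" and acyclic: "\<not> has_undirected_cycle F"
  shows "reaches_roots V R F"
  unfolding reaches_roots_def
proof (rule ballI, rule ccontr)
  fix v assume v: "v \<in> V" and unrooted: "\<nexists>n. (parent F ^^ n) v \<in> R"
  let ?p = "parent F"
  have unrooted': "(?p ^^ n) v \<notin> R" for n
    using unrooted by blast
  have orbit: "(?p ^^ n) v \<in> V - R" for n
  proof (induction n)
    case 0
    show ?case using v unrooted'[of 0] by simp
  next
    case (Suc n)
    then show ?case using parent_in_vertices[OF up] unrooted'[of "Suc n"] by simp
  qed
  then obtain a c where "0 < c" "(?p ^^ c) ((?p ^^ a) v) = (?p ^^ a) v"
    "inj_on (\<lambda>t. (?p ^^ t) ((?p ^^ a) v)) {0..<c}"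
    using finite_orbit_periodic_point[OF fin] by blast
  moreover have "((?p ^^ Suc t) ((?p ^^ a) v), (?p ^^ t) ((?p ^^ a) v)) \<in> F" for t
    using parent_edge[OF up] orbit[of "t + a"] by (simp add: funpow_add)
  ultimately have "has_undirected_cycle F"
    by (rule undirected_cycle_of_periodic_orbit)
  then show False using acyclic by contradiction
qed

lemma card_in_edges_le_1_iff:
  assumes "finite V" "F \<subseteq> V \<times> V"
  shows "card {u. (u, v) \<in> F} \<le> 1 \<longleftrightarrow> (\<forall>u u'. (u, v) \<in> F \<longrightarrow> (u', v) \<in> F \<longrightarrow> u = u')"
proof -
  have "finite {u. (u, v) \<in> F}"
    using assms by (auto intro: finite_subset[of _ V])
  then show ?thesis by (auto simp: card_le_Suc0_iff_eq)
qed

lemma directed_forest_roots_iff: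
  assumes fin: "finite V" and EV: "E \<subseteq> V \<times> V" and RV: "R \<subseteq> V"
  shows "directed_forest V E F \<and> forest_roots V F = R \<longleftrightarrow> F \<in> rooted_forests V E R"
proof
  assume "directed_forest V E F \<and> forest_roots V F = R"
  then have FE: "F \<subseteq> E" and acyclic: "\<not> has_undirected_cycle F"
    and indegree: "\<forall>v \<in> V. card {u. (u, v) \<in> F} \<le> 1" and roots: "forest_roots V F = R"
    unfolding directed_forest_def by auto
  have FV: "F \<subseteq> V \<times> V" using FE EV by blast
  have "\<exists>!u. (u, v) \<in> F" if "v \<in> V - R" for v
  proof -
    have "\<exists>u. (u, v) \<in> F" using that roots unfolding forest_roots_def by blast
    then show ?thesis using that indegree card_in_edges_le_1_iff[OF fin FV] by blast
  qed
  moreover have "(u, v) \<notin> F" if "v \<in> R" for u v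
    using that roots unfolding forest_roots_def by blast
  ultimately have up: "unique_parents V R F"
    unfolding unique_parents_def using FV by blast
  then show "F \<in> rooted_forests V E R"
    unfolding rooted_forests_def using FE reaches_roots_if_no_undirected_cycle[OF fin up acyclic] by blast
next
  assume "F \<in> rooted_forests V E R"
  then have FE: "F \<subseteq> E" and up: "unique_parents V R F" and reach: "reaches_roots V R F"
    unfolding rooted_forests_def by auto
  have in_unique: "u = u'" if "(u, v) \<in> F" "(u', v) \<in> F" for u u' v
    using parent_eqI[OF up that(1)] parent_eqI[OF up that(2)] by simp
  have "\<not> has_undirected_cycle F"
    using depth_edge_less[OF up reach] in_unique by (rule no_undirected_cycle_if_height)
  moreover have "\<forall>v \<in> V. card {u. (u, v) \<in> F} \<le> 1"
  proof
    fix v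
    have "F \<subseteq> V \<times> V" using FE EV by blast
    then show "card {u. (u, v) \<in> F} \<le> 1"
      using card_in_edges_le_1_iff[OF fin] in_unique by blast
  qed
  moreover have "forest_roots V F = R"
    using RV parent_edge[OF up] up unfolding forest_roots_def unique_parents_def by blast
  ultimately show "directed_forest V E F \<and> forest_roots V F = R"
    unfolding directed_forest_def using FE by blast
qed

lemma unique_parents_subset_eq:
  assumes up: "unique_parents V R F" and up': "unique_parents V R F'" and "F \<subseteq> F'"
  shows "F = F'"
proof
  show "F' \<subseteq> F"
  proof
    fix e assume "e \<in> F'"
    then obtain u v where e: "e = (u, v)" "(u, v) \<in> F'" by (cases e) auto
    have "(parent F v, v) \<in> F"
      using parent_edge[OF up] unique_parents_edgeD(2,3)[OF up' e(2)] by simp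
    moreover have "parent F v = u"
      using parent_eqI[OF up' e(2)] parent_eqI[OF up' subsetD[OF \<open>F \<subseteq> F'\<close> calculation]] by simp
    ultimately show "e \<in> F" using e by simp
  qed
qed fact

lemma facets_DT_R:
  assumes "finite V" "E \<subseteq> V \<times> V" "R \<subseteq> V"
  shows "facets (DT_R V E R) = rooted_forests V E R"
proof -
  have antichain: "F = F'"
    if "F \<in> rooted_forests V E R" "F' \<in> rooted_forests V E R" "F \<subseteq> F'" for F F'
    using that unique_parents_subset_eq[of V R F F'] unfolding rooted_forests_def by blast
  have "DT_R V E R = {S. \<exists>F \<in> rooted_forests V E R. S \<subseteq> F}"
    unfolding DT_R_def using directed_forest_roots_iff[OF assms] by blast
  also have "facets \<dots> = rooted_forests V E R"
    using antichain by (rule facets_downward_closure)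
  finally show ?thesis .
qed

section \<open>Exchanging a parent edge\<close>

text \<open>On finite sets the multiset order is the colexicographic order: the larger set contains the
largest element of the symmetric difference.\<close>

lemma mset_set_replace_less:
  fixes B :: "'a::linorder set"
  assumes "finite B" "e \<in> B" "d \<notin> B" "d < e"
  shows "mset_set (insert d (B - {e})) < mset_set B"
  unfolding less_multiset\<^sub>H\<^sub>O
proof (intro conjI allI impI)
  show "mset_set (insert d (B - {e})) \<noteq> mset_set B"
    using assms by (subst mset_set_eq_iff) auto
  fix y assume "count (mset_set B) y < count (mset_set (insert d (B - {e}))) y"
  then have "y = d" using assms by (auto simp: count_mset_set' split: if_splits)
  then show "\<exists>x>y. count (mset_set (insert d (B - {e}))) x < count (mset_set B) x"
    using assms by (intro exI[of _ e]) (auto simp: count_mset_set')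
qed

lemma mset_set_less_imp_greater_in_diff:
  fixes A B :: "'a::linorder set"
  assumes "finite A" "finite B" "mset_set A < mset_set B" "a \<in> A - B"
  shows "\<exists>b \<in> B - A. a < b"
proof -
  have "count (mset_set B) a < count (mset_set A) a"
    using assms by simp
  then obtain b where "a < b" "count (mset_set A) b < count (mset_set B) b"
    using assms(3) unfolding less_multiset\<^sub>H\<^sub>O by blast
  then show ?thesis
    using assms by (auto simp: count_mset_set' split: if_splits)
qed

definition reparent :: "('v \<times> 'v) set \<Rightarrow> 'v \<Rightarrow> 'v \<Rightarrow> ('v \<times> 'v) set" where
  "reparent F x w = insert (w, x) (F - {(parent F x, x)})"

definition depth_sum :: "'v set \<Rightarrow> 'v set \<Rightarrow> ('v \<times> 'v) set \<Rightarrow> nat" where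
  "depth_sum V R F = (\<Sum>v \<in> V. depth R F v)"

lemma unique_parents_reparent:
  assumes up: "unique_parents V R F" and x: "x \<in> V" "x \<notin> R" and w: "w \<in> V"
  shows "unique_parents V R (reparent F x w)"
    and "y \<in> V \<Longrightarrow> y \<notin> R \<Longrightarrow> parent (reparent F x w) y = (if y = x then w else parent F y)"
proof -
  have edge_iff: "(u, v) \<in> reparent F x w \<longleftrightarrow>
      v \<in> V \<and> v \<notin> R \<and> u = (if v = x then w else parent F v)" for u v
    using x parent_edge[OF up] parent_eqI[OF up] unique_parents_edgeD[OF up]
    unfolding reparent_def by auto
  show up': "unique_parents V R (reparent F x w)"
    unfolding unique_parents_def using edge_iff w parent_in_vertices[OF up] by auto
  show "parent (reparent F x w) y = (if y = x then w else parent F y)" if "y \<in> V" "y \<notin> R"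
    using parent_eqI[OF up'] edge_iff that by blast
qed

text \<open>The depth bound reads \<open>depth_sum G \<le> depth_sum F - depth F x + depth F w + 1\<close>, stated
without truncated subtraction.\<close>

lemma reparent_rooted_forest:
  assumes fin: "finite V" and F: "F \<in> rooted_forests V E R"
    and x: "x \<in> V" "x \<notin> R" and w: "w \<in> V" "(w, x) \<in> E"
    and deeper: "depth R F w < depth R F x"
  shows "reparent F x w \<in> rooted_forests V E R"
    and "depth_sum V R (reparent F x w) + depth R F x \<le> depth_sum V R F + Suc (depth R F w)"
proof -
  define G where "G = reparent F x w"
  define h where "h = (depth R F)(x := Suc (depth R F w))"
  have FE: "F \<subseteq> E" and up: "unique_parents V R F" and reach: "reaches_roots V R F"
    using F unfolding rooted_forests_def by auto
  note up_G = unique_parents_reparent[OF up x w(1), folded G_def]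
  have h_le: "h v \<le> depth R F v" for v
    using deeper by (simp add: h_def)
  have decreasing: "h (parent G v) < h v" if "v \<in> V" "v \<notin> R" for v
  proof (cases "v = x")
    case True
    moreover have "w \<noteq> x" using deeper by blast
    ultimately show ?thesis using up_G(2)[OF that] by (simp add: h_def)
  next
    case False
    then have "h (parent G v) \<le> depth R F (parent F v)" using up_G(2)[OF that] h_le by simp
    also have "\<dots> < depth R F v" using depth_parent[OF up reach that] by simp
    finally show ?thesis using False by (simp add: h_def)
  qed
  note depth_G = reaches_roots_depth_le[where h = h, OF up_G(1) decreasing]
  show "G \<in> rooted_forests V E R"
    using FE w(2) up_G(1) depth_G(1) unfolding rooted_forests_def G_def reparent_def by blast
  have "depth_sum V R G + depth R F x \<le> sum h V + depth R F x"
    unfolding depth_sum_def using depth_G(2) by (simp add: sum_mono)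
  also have "\<dots> = depth_sum V R F + Suc (depth R F w)"
    unfolding depth_sum_def h_def using fin x(1) by (simp add: sum.remove)
  finally show "depth_sum V R G + depth R F x \<le> depth_sum V R F + Suc (depth R F w)" .
qed

lemma parent_edges_differ:
  assumes "unique_parents V R F" "unique_parents V R F'" "x \<in> V" "x \<notin> R"
    and "(parent F x, x) \<notin> F'"
  shows "(parent F' x, x) \<notin> F"
  using assms parent_eqI parent_edge by metis

lemma exchange_vertex_if_shallower:
  assumes F: "F \<in> rooted_forests V E R" and F': "F' \<in> rooted_forests V E R"
    and y: "y \<in> V" "depth R F' y < depth R F y"
  obtains x where "x \<in> V" "x \<notin> R" "(parent F x, x) \<notin> F'"
    "Suc (depth R F (parent F' x)) < depth R F x"
proof -
  have up: "unique_parents V R F" and reach: "reaches_roots V R F"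
    and up': "unique_parents V R F'" and reach': "reaches_roots V R F'"
    using F F' unfolding rooted_forests_def by auto
  obtain x where x: "x \<in> V" "depth R F' x < depth R F x"
    and least: "\<And>z. z \<in> V \<Longrightarrow> depth R F' z < depth R F z \<Longrightarrow> depth R F' x \<le> depth R F' z"
    using ex_has_least_nat[of "\<lambda>z. z \<in> V \<and> depth R F' z < depth R F z" y "depth R F'"] y by blast
  have "x \<notin> R" using x depth_root by fastforce
  define w where "w = parent F' x"
  have w: "w \<in> V" "depth R F' x = Suc (depth R F' w)"
    using parent_in_vertices[OF up' x(1) \<open>x \<notin> R\<close>] depth_parent[OF up' reach' x(1) \<open>x \<notin> R\<close>]
    unfolding w_def by auto
  then have "depth R F w \<le> depth R F' w" using least[of w] by force
  with w x have deeper: "Suc (depth R F w) < depth R F x" by simp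
  moreover have "(parent F x, x) \<notin> F'"
  proof
    assume "(parent F x, x) \<in> F'"
    then have "w = parent F x" using parent_eqI[OF up'] unfolding w_def by blast
    then show False using deeper depth_parent[OF up reach x(1) \<open>x \<notin> R\<close>] by simp
  qed
  ultimately show thesis using that x(1) \<open>x \<notin> R\<close> unfolding w_def by blast
qed

lemma exchange_vertex_if_same_depths:
  fixes code :: "'v \<times> 'v \<Rightarrow> 'b::linorder"
  assumes fin: "finite V" and inj: "inj_on code E"
    and F: "F \<in> rooted_forests V E R" and F': "F' \<in> rooted_forests V E R"
    and same_depth: "\<And>y. y \<in> V \<Longrightarrow> depth R F y = depth R F' y"
    and colex: "mset_set (code ` F') < mset_set (code ` F)"
  obtains x where "x \<in> V" "x \<notin> R" "(parent F x, x) \<notin> F'"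
    "depth R F (parent F' x) < depth R F x" "code (parent F' x, x) < code (parent F x, x)"
proof -
  have FE: "F \<subseteq> E" and up: "unique_parents V R F"
    and F'E: "F' \<subseteq> E" and up': "unique_parents V R F'" and reach': "reaches_roots V R F'"
    using F F' unfolding rooted_forests_def by auto
  have finite: "finite F" "finite F'"
    using fin up up' unfolding unique_parents_def by (auto intro: finite_subset)
  have "F - F' \<noteq> {}"
  proof
    assume "F - F' = {}"
    then have "F = F'" using unique_parents_subset_eq[OF up up'] by blast
    then show False using colex by simp
  qed
  then obtain e where e: "e \<in> F - F'" and e_Max: "Max (code ` (F - F')) = code e"
    by (rule obtains_MAX[where f = code, OF finite_Diff[OF finite(1)]])
  obtain u x where ux: "e = (u, x)" by (cases e)
  then have x: "x \<in> V" "x \<notin> R" and u: "u = parent F x"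
    using e unique_parents_edgeD[OF up] parent_eqI[OF up] by auto
  define w where "w = parent F' x"
  have "(parent F x, x) \<notin> F'" using e ux u by simp
  then have "(w, x) \<in> F' - F"
    using parent_edge[OF up' x] parent_edges_differ[OF up up' x] unfolding w_def by blast
  then have "code (w, x) \<in> code ` F' - code ` F"
    using inj FE F'E by (auto dest: inj_onD)
  then obtain c where c: "c \<in> code ` F" "c \<notin> code ` F'" "code (w, x) < c"
    using mset_set_less_imp_greater_in_diff[OF finite_imageI[OF finite(2)] finite_imageI[OF finite(1)] colex]
    by blast
  then obtain d where "d \<in> F - F'" "c = code d" by blast
  then have "c \<le> code e"
    using finite unfolding e_Max[symmetric] by (intro Max_ge) auto
  with c have "code (w, x) < code e" by simp
  moreover have "depth R F w < depth R F x"
    using same_depth x depth_parent[OF up' reach' x] parent_in_vertices[OF up' x] unfolding w_def by simp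
  ultimately show thesis using that x e ux u unfolding w_def by blast
qed

lemma mset_set_image_reparent_less:
  fixes code :: "'v \<times> 'v \<Rightarrow> 'b::linorder"
  assumes "finite F" "F \<subseteq> E" "inj_on code E" and e: "(parent F x, x) \<in> F"
    and "(w, x) \<in> E" "(w, x) \<notin> F" "code (w, x) < code (parent F x, x)"
  shows "mset_set (code ` reparent F x w) < mset_set (code ` F)"
proof -
  have "code (w, x) \<notin> code ` F"
    using assms by (auto dest: inj_onD)
  moreover have "code ` reparent F x w = insert (code (w, x)) (code ` F - {code (parent F x, x)})"
    unfolding reparent_def using assms by (auto dest: inj_onD)
  ultimately show ?thesis
    using mset_set_replace_less[OF finite_imageI[OF \<open>finite F\<close>] imageI[OF e]] assms(7) by simp
qed

definition forest_rank ::
    "('v \<times> 'v \<Rightarrow> 'b) \<Rightarrow> 'v set \<Rightarrow> 'v set \<Rightarrow> ('v \<times> 'v) set \<Rightarrow> nat \<times> 'b multiset" where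
  "forest_rank code V R F = (depth_sum V R F, mset_set (code ` F))"

lemma exchange_vertex:
  fixes code :: "'v \<times> 'v \<Rightarrow> 'b::linorder"
  assumes fin: "finite V" and inj: "inj_on code E"
    and F: "F \<in> rooted_forests V E R" and F': "F' \<in> rooted_forests V E R"
    and less: "forest_rank code V R F' < forest_rank code V R F"
  obtains x where "x \<in> V" "x \<notin> R" "(parent F x, x) \<notin> F'"
    "reparent F x (parent F' x) \<in> rooted_forests V E R"
    "forest_rank code V R (reparent F x (parent F' x)) < forest_rank code V R F"
proof -
  have FE: "F \<subseteq> E" and up: "unique_parents V R F" and F'E: "F' \<subseteq> E" and up': "unique_parents V R F'"
    using F F' unfolding rooted_forests_def by auto
  have parent': "parent F' x \<in> V" "(parent F' x, x) \<in> E" if "x \<in> V" "x \<notin> R" for x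
    using parent_in_vertices[OF up' that] parent_edge[OF up' that] F'E by auto
  show thesis
  proof (cases "\<exists>y \<in> V. depth R F' y < depth R F y")
    case True
    then obtain x where x: "x \<in> V" "x \<notin> R" "(parent F x, x) \<notin> F'"
      and deeper: "Suc (depth R F (parent F' x)) < depth R F x"
      using exchange_vertex_if_shallower[OF F F'] by blast
    note reparent = reparent_rooted_forest[OF fin F x(1,2) parent'[OF x(1,2)] Suc_lessD[OF deeper]]
    have "depth_sum V R (reparent F x (parent F' x)) < depth_sum V R F"
      using reparent(2) deeper by simp
    then show thesis
      using that x reparent unfolding forest_rank_def by simp
  next
    case False
    then have le: "depth R F y \<le> depth R F' y" if "y \<in> V" for y
      using that by (simp add: not_less)
    then have "depth_sum V R F \<le> depth_sum V R F'"
      unfolding depth_sum_def by (rule sum_mono)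
    with less have sums: "depth_sum V R F = depth_sum V R F'"
      and colex: "mset_set (code ` F') < mset_set (code ` F)"
      unfolding forest_rank_def by auto
    have "depth R F y = depth R F' y" if "y \<in> V" for y
      using sums le that fin unfolding depth_sum_def by (rule sum_mono_inv)
    then obtain x where x: "x \<in> V" "x \<notin> R" "(parent F x, x) \<notin> F'"
      and deeper: "depth R F (parent F' x) < depth R F x"
      and code_less: "code (parent F' x, x) < code (parent F x, x)"
      using exchange_vertex_if_same_depths[OF fin inj F F' _ colex] by blast
    note reparent = reparent_rooted_forest[OF fin F x(1,2) parent'[OF x(1,2)] deeper]
    have "finite F"
      using fin up unfolding unique_parents_def by (auto intro: finite_subset)
    then have "mset_set (code ` reparent F x (parent F' x)) < mset_set (code ` F)"
      using FE inj parent_edge[OF up x(1,2)] parent'(2)[OF x(1,2)] parent_edges_differ[OF up up' x]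
        code_less by (rule mset_set_image_reparent_less)
    moreover have "depth_sum V R (reparent F x (parent F' x)) \<le> depth_sum V R F"
      using reparent(2) deeper by simp
    ultimately show thesis
      using that x reparent(1) unfolding forest_rank_def by simp
  qed
qed

lemma rooted_forests_exchange:
  fixes code :: "'v \<times> 'v \<Rightarrow> 'b::linorder"
  assumes fin: "finite V" and inj: "inj_on code E"
    and F: "F \<in> rooted_forests V E R" and F': "F' \<in> rooted_forests V E R"
    and less: "forest_rank code V R F' < forest_rank code V R F"
  shows "\<exists>G \<in> rooted_forests V E R. forest_rank code V R G < forest_rank code V R F \<and>
    (\<exists>e \<in> F. F' \<inter> F \<subseteq> G \<inter> F \<and> G \<inter> F = F - {e})"
proof -
  have up: "unique_parents V R F" and up': "unique_parents V R F'"
    using F F' unfolding rooted_forests_def by auto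
  obtain x where x: "x \<in> V" "x \<notin> R" "(parent F x, x) \<notin> F'"
    and G: "reparent F x (parent F' x) \<in> rooted_forests V E R"
      "forest_rank code V R (reparent F x (parent F' x)) < forest_rank code V R F"
    using exchange_vertex[OF fin inj F F' less] by blast
  have "F' \<inter> F \<subseteq> reparent F x (parent F' x) \<inter> F"
    "reparent F x (parent F' x) \<inter> F = F - {(parent F x, x)}"
    using x(3) parent_edges_differ[OF up up' x] unfolding reparent_def by auto
  then show ?thesis
    using G parent_edge[OF up x(1,2)] by blast
qed

lemma finite_rooted_forests: "finite E \<Longrightarrow> finite (rooted_forests V E R)"
  unfolding rooted_forests_def by (auto intro: finite_subset[of _ "Pow E"])

lemma inj_on_forest_rank:
  assumes "finite E" "inj_on code E"
  shows "inj_on (forest_rank code V R) (rooted_forests V E R)"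
proof (rule inj_onI)
  fix F G assume "F \<in> rooted_forests V E R" "G \<in> rooted_forests V E R"
    and "forest_rank code V R F = forest_rank code V R G"
  then have "F \<subseteq> E" "G \<subseteq> E" "mset_set (code ` F) = mset_set (code ` G)"
    unfolding rooted_forests_def forest_rank_def by auto
  then show "F = G"
    using assms by (simp add: finite_subset inj_on_image_eq_iff)
qed

theorem theorem2p9:
  fixes V :: "'v set" and E :: "('v \<times> 'v) set" and R :: "'v set"
  assumes "finite V" and "E \<subseteq> V \<times> V" and "R \<subseteq> V"
  shows "shellable (DT_R V E R)"
proof -
  have "finite E" using assms(1,2) by (simp add: finite_subset)
  then obtain code :: "'v \<times> 'v \<Rightarrow> nat" where code: "inj_on code E"
    using finite_imp_inj_to_nat_seg by blast
  show ?thesis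
  proof (rule shellable_if_ranked_exchange[where rank = "forest_rank code V R"],
      unfold facets_DT_R[OF assms])
    show "finite (rooted_forests V E R)" using \<open>finite E\<close> by (rule finite_rooted_forests)
    show "inj_on (forest_rank code V R) (rooted_forests V E R)"
      using \<open>finite E\<close> code by (rule inj_on_forest_rank)
  qed (rule rooted_forests_exchange[OF assms(1) code])
qed

end
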